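(* Let $C:=\sqrt{\frac{15+\sqrt{65}}{8}}$ and let $g:\mathbb{R}\to\mathbb{R}$ be $$g(z):=-\frac{2}{5}z^4+\frac{8}{5}Cz^3+\Big(\frac32-\frac{12}{5}C^2\Big)z^2+\Big(\frac85C^3-3C\Big)z+1 .$$ For $W=[w_1,w_2,w_3]$ with $w_1,w_2,w_3\in\mathbb{R}^3$, define $f(\cdot;W):\mathbb{R}^3\to\mathbb{R}^3$ by $f(x;W):=[g(\langle w_1,x\rangle),g(\langle w_2,x\rangle),g(\langle w_3,x\rangle)]^\top$. Then there exists such a $W$ for which $f(\cdot;W)$ has two distinct fixed points $p_1,p_2\in\mathbb{R}^3$ such that for each $i\in\{1,2\}$ there exist constants $\epsilon_i>0$, $c_i>0$ and $K_i\in[0,1)$ with the following property: for every initial point $x^{(0)}\in[p_{i,1}-\epsilon_i,p_{i,1}+\epsilon_i]\times\{1\}\times\{1\}$, the fixed-point iteration $x^{(t)}=f(x^{(t-1)};W)$ ($t\ge1$) converges to $p_i$, and for every $t\ge2$, $$\|x^{(t)}-p_i\|_\infty\le K_i^t\cdot c_i\epsilon_i .$$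
   Context: $p_{i,1}$ denotes the first coordinate of $p_i$; $\|\cdot\|_\infty$ is the $\ell_\infty$ norm. A fixed point of $F$ is a point $p$ with $F(p)=p$. *)

theory Defs
  imports "HOL-Analysis.Analysis"
begin

definition Cconst :: real where
  "Cconst = sqrt ((15 + sqrt 65) / 8)"

definition gB4 :: "real \<Rightarrow> real" where
  "gB4 z = - (2/5) * z^4 + (8/5) * Cconst * z^3 + (3/2 - (12/5) * Cconst^2) * z^2
           + ((8/5) * Cconst^3 - 3 * Cconst) * z + 1"

definition fB4 :: "real^3^3 \<Rightarrow> real^3 \<Rightarrow> real^3" where
  "fB4 W x = (\<chi> i. gB4 ((W $ i) \<bullet> x))"

end

theory Submission
  imports Defs
begin

text \<open>Take \<open>w\<^sub>2 = w\<^sub>3 = 0\<close>: since \<open>g 0 = 1\<close>, the last two coordinates of every iterate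
  equal \<open>1\<close>, and the first coordinate follows the scalar map \<open>h x = g (a x + b)\<close>
  with \<open>w\<^sub>1 = (a, b, 0)\<close>. In the variable \<open>u = z - C\<close> one has \<open>g'(C + u) = u (3 - 8u\<^sup>2/5)\<close>,
  so \<open>C\<close> and \<open>C + s\<close>, \<open>s = \<surd>(15/8)\<close>, are critical points of \<open>g\<close>, with values
  \<open>m\<close> and \<open>M = m + 45/32\<close>. Choosing the affine map \<open>x \<mapsto> a x + b\<close> that sends \<open>m\<close> to \<open>C\<close>
  and \<open>M\<close> to \<open>C + s\<close> makes \<open>m\<close> and \<open>M\<close> fixed points of \<open>h\<close> with \<open>h' = 0\<close> there.
  Such superattracting fixed points attract their neighbourhoods at every geometric
  rate, and we use the rate \<open>1/2\<close>.\<close>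

lemma fixpoint_locally_contracting:
  fixes h :: "real \<Rightarrow> real"
  assumes deriv: "(h has_real_derivative D) (at p)" and fixed: "h p = p" and less: "\<bar>D\<bar> < K"
  obtains \<epsilon> where "\<epsilon> > 0" "\<And>x. \<bar>x - p\<bar> \<le> \<epsilon> \<Longrightarrow> \<bar>h x - p\<bar> \<le> K * \<bar>x - p\<bar>"
proof -
  have "((\<lambda>x. \<bar>(h x - h p) / (x - p)\<bar>) \<longlongrightarrow> \<bar>D\<bar>) (at p)"
    using deriv by (intro tendsto_rabs) (simp add: has_field_derivative_iff)
  then have "\<forall>\<^sub>F x in at p. \<bar>(h x - h p) / (x - p)\<bar> < K"
    using less by (rule order_tendstoD)
  then obtain d where "d > 0" and d: "\<And>x. x \<noteq> p \<Longrightarrow> \<bar>x - p\<bar> < d \<Longrightarrow> \<bar>h x - p\<bar> < K * \<bar>x - p\<bar>"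
    using fixed by (auto simp: eventually_at dist_real_def abs_divide divide_less_eq)
  show thesis
  proof
    show "d / 2 > 0" using \<open>d > 0\<close> by simp
    show "\<bar>h x - p\<bar> \<le> K * \<bar>x - p\<bar>" if "\<bar>x - p\<bar> \<le> d / 2" for x
      using d[of x] that \<open>d > 0\<close> fixed by (cases "x = p") auto
  qed
qed

lemma funpow_dist_le_power:
  fixes h :: "'a::metric_space \<Rightarrow> 'a"
  assumes contr: "\<And>x. dist x p \<le> \<epsilon> \<Longrightarrow> dist (h x) p \<le> K * dist x p"
    and "0 \<le> K" "K \<le> 1" and "dist x p \<le> \<epsilon>"
  shows "dist ((h ^^ t) x) p \<le> K ^ t * dist x p"
proof (induction t)
  case 0
  show ?case by simp
next
  case (Suc t)
  have "K ^ t * dist x p \<le> \<epsilon>"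
    using assms(2-4) by (meson order_trans mult_left_le_one_le power_le_one zero_le_dist zero_le_power)
  then have "dist ((h ^^ Suc t) x) p \<le> K * dist ((h ^^ t) x) p"
    using Suc contr by simp
  also have "\<dots> \<le> K ^ Suc t * dist x p"
    using mult_left_mono[OF Suc.IH \<open>0 \<le> K\<close>] by (simp add: mult.assoc)
  finally show ?case .
qed

lemma fixpoint_attracts_geometrically:
  fixes h :: "real \<Rightarrow> real"
  assumes "(h has_real_derivative D) (at p)" "h p = p" "\<bar>D\<bar> < K" "K \<le> 1"
  obtains \<epsilon> where "\<epsilon> > 0" "\<And>x t. \<bar>x - p\<bar> \<le> \<epsilon> \<Longrightarrow> \<bar>(h ^^ t) x - p\<bar> \<le> K ^ t * \<epsilon>"
proof -
  obtain \<epsilon> where "\<epsilon> > 0" and contr: "\<And>x. \<bar>x - p\<bar> \<le> \<epsilon> \<Longrightarrow> \<bar>h x - p\<bar> \<le> K * \<bar>x - p\<bar>"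
    using fixpoint_locally_contracting assms(1-3) by blast
  have "0 \<le> K" using assms(3) by linarith
  show thesis
  proof
    show "\<epsilon> > 0" by fact
    fix x t assume x: "\<bar>x - p\<bar> \<le> \<epsilon>"
    have "\<bar>(h ^^ t) x - p\<bar> \<le> K ^ t * \<bar>x - p\<bar>"
      using funpow_dist_le_power[of p \<epsilon> h K x t] contr x \<open>0 \<le> K\<close> assms(4)
      by (simp add: dist_real_def)
    also have "\<dots> \<le> K ^ t * \<epsilon>"
      using x \<open>0 \<le> K\<close> by (simp add: mult_left_mono)
    finally show "\<bar>(h ^^ t) x - p\<bar> \<le> K ^ t * \<epsilon>" .
  qed
qed

lemma affine_map_through_two_points:
  fixes m M y Y :: real
  assumes "m \<noteq> M"
  obtains a b where "a * m + b = y" "a * M + b = Y"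
proof
  define a where "a = (Y - y) / (M - m)"
  show "a * m + (y - a * m) = y" by simp
  have "a * (M - m) = Y - y"
    using assms by (simp add: a_def)
  then show "a * M + (y - a * m) = Y"
    by (simp add: algebra_simps)
qed

lemma gB4_shift: "gB4 (Cconst + u) = gB4 Cconst - (2/5) * u^4 + (3/2) * u^2"
  unfolding gB4_def by (simp add: field_simps power2_eq_square power3_eq_cube power4_eq_xxxx)

lemma gB4_has_derivative_shift:
  "(gB4 has_real_derivative u * (3 - (8/5) * u^2)) (at (Cconst + u))"
  unfolding gB4_def[abs_def]
  by (rule derivative_eq_intros refl)+ (simp add: field_simps power2_eq_square power3_eq_cube)

lemma gB4_critical_points:
  defines "s \<equiv> sqrt (15/8)"
  shows "(gB4 has_real_derivative 0) (at Cconst)"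
    and "(gB4 has_real_derivative 0) (at (Cconst + s))"
    and "gB4 (Cconst + s) = gB4 Cconst + 45/32"
proof -
  have s2: "s^2 = 15/8" by (simp add: s_def)
  have "s^4 = (s^2)^2" by (simp flip: power_mult)
  also have "\<dots> = 225/64" unfolding s2 by (simp add: power2_eq_square)
  finally have "s^4 = 225/64" .
  then show "gB4 (Cconst + s) = gB4 Cconst + 45/32"
    using gB4_shift[of s] s2 by simp
  show "(gB4 has_real_derivative 0) (at Cconst)"
    using gB4_has_derivative_shift[of 0] by simp
  show "(gB4 has_real_derivative 0) (at (Cconst + s))"
    using gB4_has_derivative_shift[of s] s2 by simp
qed

definition weights_first_row :: "real \<Rightarrow> real \<Rightarrow> real^3^3" where
  "weights_first_row a b = vector [vector [a, b, 0], 0, 0]"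

lemma fB4_weights_first_row:
  assumes "x $ 2 = 1" "x $ 3 = 1"
  shows "fB4 (weights_first_row a b) x = vector [gB4 (a * x $ 1 + b), 1, 1]"
proof -
  have "gB4 0 = 1" by (simp add: gB4_def)
  then show ?thesis
    using assms by (simp add: fB4_def weights_first_row_def vec_eq_iff forall_3 inner_vec_def sum_3)
qed

lemma funpow_fB4_weights_first_row:
  assumes "x $ 2 = 1" "x $ 3 = 1"
  shows "(fB4 (weights_first_row a b) ^^ t) x = vector [((\<lambda>u. gB4 (a * u + b)) ^^ t) (x $ 1), 1, 1]"
  using assms by (induction t) (simp_all add: vec_eq_iff forall_3 fB4_weights_first_row)

lemma norm_vector_first_axis: "norm (vector [u, 0, 0] :: real^3) = \<bar>u\<bar>"
  by (simp add: norm_vec_def L2_set_def sum_3)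

definition attracts_along_first_axis :: "(real^3 \<Rightarrow> real^3) \<Rightarrow> real^3 \<Rightarrow> bool" where
  "attracts_along_first_axis F p \<longleftrightarrow> (\<exists>\<epsilon> c K :: real. \<epsilon> > 0 \<and> c > 0 \<and> 0 \<le> K \<and> K < 1 \<and>
     (\<forall>x0 :: real^3. x0 $ 1 \<in> {p $ 1 - \<epsilon> .. p $ 1 + \<epsilon>} \<and> x0 $ 2 = 1 \<and> x0 $ 3 = 1 \<longrightarrow>
        ((\<lambda>t. (F ^^ t) x0) \<longlonglongrightarrow> p) \<and>
        (\<forall>t::nat. t \<ge> 2 \<longrightarrow> infnorm ((F ^^ t) x0 - p) \<le> K ^ t * c * \<epsilon>)))"

lemma weights_first_row_attracts:
  assumes fixed: "gB4 (a * q + b) = q" and critical: "(gB4 has_real_derivative 0) (at (a * q + b))"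
  shows "attracts_along_first_axis (fB4 (weights_first_row a b)) (vector [q, 1, 1])"
proof -
  define h where "h = (\<lambda>u. gB4 (a * u + b))"
  define F where "F = fB4 (weights_first_row a b)"
  have "(h has_real_derivative 0 * a) (at q)"
    unfolding h_def
    by (rule DERIV_chain2[where g = "\<lambda>u. a * u + b" and x = q, OF critical])
      (auto intro!: derivative_eq_intros)
  then obtain \<epsilon> where "\<epsilon> > 0" and orbit: "\<And>x t. \<bar>x - q\<bar> \<le> \<epsilon> \<Longrightarrow> \<bar>(h ^^ t) x - q\<bar> \<le> (1/2) ^ t * \<epsilon>"
    using fixpoint_attracts_geometrically[of h 0 q "1/2"] fixed by (auto simp: h_def)
  have "((\<lambda>t. (F ^^ t) x0) \<longlonglongrightarrow> vector [q, 1, 1]) \<and>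
        infnorm ((F ^^ t) x0 - vector [q, 1, 1]) \<le> (1/2) ^ t * 1 * \<epsilon>"
    if x0: "x0 $ 1 \<in> {q - \<epsilon> .. q + \<epsilon>}" "x0 $ 2 = 1" "x0 $ 3 = 1" for x0 t
  proof -
    have "\<bar>x0 $ 1 - q\<bar> \<le> \<epsilon>" using x0(1) by auto
    have "(F ^^ n) x0 - vector [q, 1, 1] = vector [(h ^^ n) (x0 $ 1) - q, 0, 0]" for n
      using x0 by (simp add: F_def h_def funpow_fB4_weights_first_row vec_eq_iff forall_3)
    then have norm_le: "norm ((F ^^ n) x0 - vector [q, 1, 1]) \<le> (1/2) ^ n * \<epsilon>" for n
      using orbit[OF \<open>\<bar>x0 $ 1 - q\<bar> \<le> \<epsilon>\<close>, of n] by (simp add: norm_vector_first_axis)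
    have "(\<lambda>n. (1/2::real) ^ n * \<epsilon>) \<longlonglongrightarrow> 0"
      by (intro tendsto_mult_left_zero LIMSEQ_power_zero) simp
    then have "(\<lambda>n. (F ^^ n) x0 - vector [q, 1, 1]) \<longlonglongrightarrow> 0"
      by (rule Lim_null_comparison[rotated]) (simp add: norm_le always_eventually)
    moreover have "infnorm ((F ^^ t) x0 - vector [q, 1, 1]) \<le> (1/2) ^ t * \<epsilon>"
      using infnorm_le_norm norm_le order_trans by blast
    ultimately show ?thesis
      by (simp add: LIM_zero_cancel)
  qed
  then show ?thesis
    unfolding attracts_along_first_axis_def F_def
    by (intro exI[of _ \<epsilon>] exI[of _ 1] exI[of _ "1/2"]) (simp add: \<open>\<epsilon> > 0\<close>)
qed

theorem lemmaB4:
  shows "\<exists>W :: real^3^3. \<exists>p1 p2 :: real^3.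
     fB4 W p1 = p1 \<and> fB4 W p2 = p2 \<and> p1 \<noteq> p2 \<and>
     (\<forall>p \<in> {p1, p2}. \<exists>\<epsilon> c K :: real. \<epsilon> > 0 \<and> c > 0 \<and> 0 \<le> K \<and> K < 1 \<and>
        (\<forall>x0 :: real^3. x0 $ 1 \<in> {p $ 1 - \<epsilon> .. p $ 1 + \<epsilon>} \<and> x0 $ 2 = 1 \<and> x0 $ 3 = 1 \<longrightarrow>
           ((\<lambda>t. (fB4 W ^^ t) x0) \<longlonglongrightarrow> p) \<and>
           (\<forall>t::nat. t \<ge> 2 \<longrightarrow> infnorm ((fB4 W ^^ t) x0 - p) \<le> K ^ t * c * \<epsilon>)))"
proof -
  define z where "z = Cconst + sqrt (15/8)"
  define m where "m = gB4 Cconst"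
  define M where "M = gB4 z"
  have "M = m + 45/32"
    using gB4_critical_points(3) by (simp add: m_def M_def z_def)
  then obtain a b where am: "a * m + b = Cconst" and aM: "a * M + b = z"
    using affine_map_through_two_points[of m M Cconst z] by auto
  have critical: "(gB4 has_real_derivative 0) (at (a * m + b))"
    "(gB4 has_real_derivative 0) (at (a * M + b))"
    using gB4_critical_points(1,2) am aM by (simp_all add: z_def)
  have fixed: "gB4 (a * m + b) = m" "gB4 (a * M + b) = M"
    using am aM by (simp_all add: m_def M_def)
  define W where "W = weights_first_row a b"
  define p1 where "p1 = (vector [m, 1, 1] :: real^3)"
  define p2 where "p2 = (vector [M, 1, 1] :: real^3)"
  have "fB4 W p1 = p1" "fB4 W p2 = p2"
    using fixed by (simp_all add: W_def p1_def p2_def fB4_weights_first_row)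
  moreover have "p1 \<noteq> p2"
    using \<open>M = m + 45/32\<close>
    by (metis p1_def p2_def vector_3(1) add_cancel_left_right zero_neq_numeral divide_eq_0_iff)
  moreover have "attracts_along_first_axis (fB4 W) p1" "attracts_along_first_axis (fB4 W) p2"
    using weights_first_row_attracts fixed critical by (simp_all add: W_def p1_def p2_def)
  ultimately show ?thesis
    unfolding attracts_along_first_axis_def by blast
qed

end
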